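(* Let $\alpha\ge1$, $\beta\ge0$ and $\varepsilon>0$ be reals, and let $\mathscr{C}$ be a graph class closed under taking the subgraph formed by any union of connected components. Suppose $\mathsf{A}$ is a deterministic LOCAL algorithm with round complexity $r$ which on every $G\in\mathscr{C}$ outputs a dominating set of size at most $\alpha\,\mathrm{MDS}(G)+\beta$. Then there is a deterministic LOCAL algorithm with round complexity $r+O(\beta/\varepsilon)$ which on every $G\in\mathscr{C}$ outputs a dominating set of size at most $(\alpha+\varepsilon)\,\mathrm{MDS}(G)$.
   Context: $\mathrm{MDS}(G)$ is the minimum size of a dominating set of $G$. Deterministic LOCAL model: distinct positive integer identifiers, synchronous rounds of unbounded message exchange with neighbours and unbounded local computation; round complexity $r$ means every vertex fixes its output after $r$ rounds; the output is the set of vertices outputting "selected". *)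

theory Defs
  imports Complex_Main
begin

text \<open>A graph is a pair (V, E): V is a finite set of vertex identifiers (distinct positive
  integers), E a symmetric irreflexive set of ordered pairs of vertices.\<close>

type_synonym graph = "nat set \<times> (nat \<times> nat) set"

definition wf_graph :: "graph \<Rightarrow> bool" where
  "wf_graph G \<longleftrightarrow> finite (fst G) \<and> 0 \<notin> fst G \<and> snd G \<subseteq> fst G \<times> fst G
     \<and> (\<forall>x y. (x, y) \<in> snd G \<longrightarrow> (y, x) \<in> snd G) \<and> (\<forall>x. (x, x) \<notin> snd G)"

definition dominating :: "graph \<Rightarrow> nat set \<Rightarrow> bool" where
  "dominating G D \<longleftrightarrow> D \<subseteq> fst G \<and>
     (\<forall>v\<in>fst G. v \<in> D \<or> (\<exists>u\<in>D. (u, v) \<in> snd G))"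

definition MDS :: "graph \<Rightarrow> nat" where
  "MDS G = (LEAST k. \<exists>D. dominating G D \<and> card D = k)"

definition ball :: "graph \<Rightarrow> nat \<Rightarrow> nat \<Rightarrow> nat set" where
  "ball G k v = {u. v \<in> fst G \<and> (v, u) \<in> (Id_on (fst G) \<union> snd G) ^^ k}"

text \<open>The view of v after r rounds: the identifiers of all vertices within distance r,
  and all edges incident to a vertex at distance less than r.\<close>
definition view_vertices :: "graph \<Rightarrow> nat \<Rightarrow> nat \<Rightarrow> nat set" where
  "view_vertices G r v = ball G r v"

definition view_edges :: "graph \<Rightarrow> nat \<Rightarrow> nat \<Rightarrow> (nat \<times> nat) set" where
  "view_edges G r v = {(x, y) \<in> snd G. \<exists>k. Suc k \<le> r \<and> (x \<in> ball G k v \<or> y \<in> ball G k v)}"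

text \<open>A deterministic LOCAL algorithm with round complexity r is a function of the
  r-round view (own identifier, vertex identifiers seen, edges seen) to the output
  "selected" (True) / "not selected" (False).\<close>
type_synonym local_alg = "nat \<Rightarrow> nat set \<Rightarrow> (nat \<times> nat) set \<Rightarrow> bool"

definition run_local :: "local_alg \<Rightarrow> nat \<Rightarrow> graph \<Rightarrow> nat set" where
  "run_local A r G = {v \<in> fst G. A v (view_vertices G r v) (view_edges G r v)}"

definition induced :: "graph \<Rightarrow> nat set \<Rightarrow> graph" where
  "induced G S = (S, {(x, y) \<in> snd G. x \<in> S \<and> y \<in> S})"

definition union_of_components :: "graph \<Rightarrow> nat set \<Rightarrow> bool" where
  "union_of_components G S \<longleftrightarrow> S \<subseteq> fst G \<and> (\<forall>x y. (x, y) \<in> snd G \<longrightarrow> x \<in> S \<longrightarrow> y \<in> S)"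

definition closed_under_components :: "graph set \<Rightarrow> bool" where
  "closed_under_components \<C> \<longleftrightarrow>
     (\<forall>G\<in>\<C>. \<forall>S. wf_graph G \<longrightarrow> union_of_components G S \<longrightarrow> induced G S \<in> \<C>)"

end

theory Submission
  imports Defs
begin

(*
  Let m = ceil (beta / epsilon). A vertex whose ball of radius 3m has stopped growing sees its
  whole connected component within 3m + 1 rounds; if that component has domination number at
  most m, the vertex solves it exactly. All other vertices run A; they form a union of
  components, so A pays its additive error beta only once. If that part is nonempty, it
  contains a component of domination number > m or a vertex v with vertices at distances
  0, 3, ..., 3m, whose dominators are pairwise distinct. Either way an optimal dominating set
  has more than m >= beta / epsilon vertices there, so beta is absorbed into epsilon * MDS.
  When beta <= epsilon no extra rounds are allowed, and A itself already suffices.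
*)

lemma wf_graph_edges: "wf_graph G \<Longrightarrow> snd G \<subseteq> fst G \<times> fst G"
  and wf_graph_sym: "wf_graph G \<Longrightarrow> (x, y) \<in> snd G \<Longrightarrow> (y, x) \<in> snd G"
  and wf_graph_finite: "wf_graph G \<Longrightarrow> finite (fst G)"
  by (auto simp: wf_graph_def)

section \<open>Balls\<close>

lemma ball_0: "ball G 0 v = (if v \<in> fst G then {v} else {})"
  by (auto simp: ball_def)

lemma ball_Suc:
  "ball G (Suc k) v = {u. \<exists>x\<in>ball G k v. (x = u \<and> x \<in> fst G) \<or> (x, u) \<in> snd G}"
  by (auto simp: ball_def elim!: relpow_Suc_E intro: relpow_Suc_I)

lemma edge_from_ball: "x \<in> ball G k v \<Longrightarrow> (x, y) \<in> snd G \<Longrightarrow> y \<in> ball G (Suc k) v"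
  by (auto simp: ball_Suc)

lemma ball_subset: "snd G \<subseteq> fst G \<times> fst G \<Longrightarrow> ball G k v \<subseteq> fst G"
  by (induction k) (auto simp: ball_0 ball_Suc)

lemma ball_mono:
  assumes "snd G \<subseteq> fst G \<times> fst G" and "j \<le> k"
  shows "ball G j v \<subseteq> ball G k v"
proof (rule lift_Suc_mono_le[OF _ assms(2)])
  show "ball G n v \<subseteq> ball G (Suc n) v" for n
    using ball_subset[OF assms(1), of n v] by (auto simp: ball_Suc)
qed

lemma center_in_ball: "snd G \<subseteq> fst G \<times> fst G \<Longrightarrow> v \<in> fst G \<Longrightarrow> v \<in> ball G k v"
  using ball_mono[of G 0 k v] by (auto simp: ball_0)

lemma ball_subset_closed:
  assumes "v \<in> S" and "\<And>x y. (x, y) \<in> snd G \<Longrightarrow> x \<in> S \<Longrightarrow> y \<in> S"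
  shows "ball G k v \<subseteq> S"
  using assms by (induction k) (auto simp: ball_0 ball_Suc)

lemma ball_stable:
  assumes "ball G (Suc k) v = ball G k v" and "k \<le> j"
  shows "ball G j v = ball G k v"
  using assms(2)
proof (induction j rule: dec_induct)
  case (step j)
  then have "ball G (Suc j) v = ball G (Suc k) v" by (simp only: ball_Suc)
  with assms(1) show ?case by simp
qed simp

lemma ball_grows_below:
  assumes "snd G \<subseteq> fst G \<times> fst G" and "ball G (Suc k) v \<noteq> ball G k v" and "j \<le> k"
  obtains y where "y \<in> ball G (Suc j) v" and "y \<notin> ball G j v"
proof -
  have "ball G (Suc j) v \<noteq> ball G j v"
    using ball_stable[of G j v] assms(2,3) by (metis le_SucI)
  moreover have "ball G j v \<subseteq> ball G (Suc j) v" by (rule ball_mono[OF assms(1)]) simp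
  ultimately show thesis using that by blast
qed

lemma union_of_components_stable_ball:
  assumes "snd G \<subseteq> fst G \<times> fst G" and "ball G (Suc k) v = ball G k v"
  shows "union_of_components G (ball G k v)"
  using assms ball_subset[OF assms(1)] edge_from_ball[of _ G k v]
  unfolding union_of_components_def by blast

lemma sym_relpow: "sym R \<Longrightarrow> sym (R ^^ k)"
proof (induction k)
  case (Suc k)
  show ?case
  proof (rule symI)
    fix a b assume "(a, b) \<in> R ^^ Suc k"
    then obtain y where "(a, y) \<in> R ^^ k" "(y, b) \<in> R" by (auto elim: relpow_Suc_E)
    with Suc show "(b, a) \<in> R ^^ Suc k" by (blast dest: symD intro: relpow_Suc_I2)
  qed
qed (simp add: sym_def)

lemma ball_sym:
  assumes "wf_graph G" and "u \<in> ball G k v"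
  shows "v \<in> ball G k u"
proof -
  let ?R = "Id_on (fst G) \<union> snd G"
  have "sym ?R" using assms(1) by (auto simp: wf_graph_def sym_def)
  moreover have "(v, u) \<in> ?R ^^ k" using assms(2) by (simp add: ball_def)
  ultimately have "(u, v) \<in> ?R ^^ k" by (blast dest: sym_relpow symD)
  moreover have "u \<in> fst G" using assms ball_subset[of G k v] by (auto simp: wf_graph_def)
  ultimately show ?thesis by (simp add: ball_def)
qed

lemma card_dominators_in_growing_ball:
  assumes wf: "wf_graph G" and v: "v \<in> fst G"
    and grows: "ball G (Suc (3 * m)) v \<noteq> ball G (3 * m) v"
    and dom: "\<And>u. u \<in> ball G (3 * m) v \<Longrightarrow> u \<in> D \<or> (\<exists>x\<in>D. (x, u) \<in> snd G)"
    and "finite D"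
  shows "m + 1 \<le> card (D \<inter> ball G (Suc (3 * m)) v)"
proof -
  have E: "snd G \<subseteq> fst G \<times> fst G" using wf by (rule wf_graph_edges)
  have "\<exists>x\<in>D. x \<in> ball G (Suc (3 * t)) v \<and> (0 < t \<longrightarrow> x \<notin> ball G (3 * t - 2) v)"
    if t: "t \<le> m" for t
  proof -
    obtain y where y: "y \<in> ball G (3 * t) v" "0 < t \<Longrightarrow> y \<notin> ball G (3 * t - 1) v"
    proof (cases "t = 0")
      case True
      then show thesis using that[of v] center_in_ball[OF E v] by simp
    next
      case False
      then have j: "3 * t - 1 \<le> 3 * m" "Suc (3 * t - 1) = 3 * t" using t by auto
      obtain y where "y \<in> ball G (Suc (3 * t - 1)) v" "y \<notin> ball G (3 * t - 1) v"
        using ball_grows_below[OF E grows j(1)] .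
      with that j(2) show thesis by simp
    qed
    have "y \<in> ball G (3 * m) v" using y(1) ball_mono[OF E, of "3 * t" "3 * m" v] t by auto
    then obtain x where x: "x \<in> D" "x = y \<or> (x, y) \<in> snd G" using dom by blast
    have "x \<in> ball G (Suc (3 * t)) v"
      using x(2) y(1) ball_mono[OF E, of "3 * t" "Suc (3 * t)" v]
      by (auto intro: edge_from_ball[OF y(1)] wf_graph_sym[OF wf])
    moreover have "x \<notin> ball G (3 * t - 2) v" if "0 < t"
    proof
      assume x_near: "x \<in> ball G (3 * t - 2) v"
      then have "y \<in> ball G (Suc (3 * t - 2)) v"
        using x(2) ball_mono[OF E, of "3 * t - 2" "Suc (3 * t - 2)" v]
        by (auto intro: edge_from_ball[OF x_near])
      with y(2) that show False by (simp add: Suc_diff_Suc numeral_2_eq_2)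
    qed
    ultimately show ?thesis using x(1) by blast
  qed
  then obtain f where f: "\<And>t. t \<le> m \<Longrightarrow>
      f t \<in> D \<and> f t \<in> ball G (Suc (3 * t)) v \<and> (0 < t \<longrightarrow> f t \<notin> ball G (3 * t - 2) v)"
    by metis
  \<comment> \<open>\<open>f t\<close> lies at distance between \<open>3t - 1\<close> and \<open>3t + 1\<close> from \<open>v\<close>, so the \<open>f t\<close> are
    pairwise distinct.\<close>
  have "inj_on f {..m}"
  proof (rule linorder_inj_onI)
    fix s t assume "s < t" "s \<in> {..m}" "t \<in> {..m}"
    moreover have "ball G (Suc (3 * s)) v \<subseteq> ball G (3 * t - 2) v"
      using \<open>s < t\<close> by (intro ball_mono[OF E]) auto
    ultimately show "f s \<noteq> f t" using f[of s] f[of t] by auto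
  qed auto
  moreover have "f ` {..m} \<subseteq> D \<inter> ball G (Suc (3 * m)) v"
    using f ball_mono[OF E, of "Suc (3 * _)" "Suc (3 * m)" v] by fastforce
  ultimately show ?thesis
    using card_mono[of "D \<inter> ball G (Suc (3 * m)) v" "f ` {..m}"] \<open>finite D\<close>
    by (simp add: card_image)
qed

section \<open>Locality of views and components\<close>

lemma ball_of_view:
  assumes wf: "wf_graph G" and v: "v \<in> fst G" and "k \<le> r"
  shows "ball (ball G r v, view_edges G r v) k v = ball G k v"
  using \<open>k \<le> r\<close>
proof (induction k)
  case 0
  show ?case using center_in_ball[OF wf_graph_edges[OF wf] v] v by (simp add: ball_0)
next
  case (Suc k)
  have E: "snd G \<subseteq> fst G \<times> fst G" using wf by (rule wf_graph_edges)
  have "ball G k v \<subseteq> ball G r v" using ball_mono[OF E, of k r v] Suc by simp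
  moreover have "ball G k v \<subseteq> fst G" by (rule ball_subset[OF E])
  moreover have "(x, u) \<in> view_edges G r v \<longleftrightarrow> (x, u) \<in> snd G" if "x \<in> ball G k v" for x u
    using that Suc(2) by (auto simp: view_edges_def)
  ultimately show ?case using Suc by (simp only: ball_Suc[of _ k]) auto
qed

lemma view_edges_of_view:
  assumes "wf_graph G" and "v \<in> fst G" and "k \<le> r"
  shows "view_edges (ball G r v, view_edges G r v) k v = view_edges G k v"
  using ball_of_view[OF assms(1,2)] \<open>k \<le> r\<close>
  unfolding view_edges_def by (auto 0 4 intro: le_trans)

lemma induced_view:
  assumes "k < r"
  shows "induced (ball G r v, view_edges G r v) (ball G k v) = induced G (ball G k v)"
  using assms unfolding induced_def view_edges_def by force

lemma wf_graph_induced: "wf_graph G \<Longrightarrow> S \<subseteq> fst G \<Longrightarrow> wf_graph (induced G S)"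
  by (auto simp: wf_graph_def induced_def finite_subset)

lemma union_of_components_Diff:
  assumes "wf_graph G" and "union_of_components G S"
  shows "union_of_components G (fst G - S)"
  using assms wf_graph_edges[OF assms(1)] wf_graph_sym[OF assms(1)]
  unfolding union_of_components_def by blast

lemma ball_induced:
  assumes S: "union_of_components G S" and v: "v \<in> S"
  shows "ball (induced G S) k v = ball G k v"
proof (induction k)
  case 0
  show ?case using S v by (auto simp: ball_0 induced_def union_of_components_def)
next
  case (Suc k)
  have "ball G k v \<subseteq> S"
    using S v by (intro ball_subset_closed) (auto simp: union_of_components_def)
  with S show ?case
    unfolding ball_Suc[of _ k] Suc by (auto simp: induced_def union_of_components_def) blast
qed

lemma view_edges_induced:
  assumes wf: "wf_graph G" and S: "union_of_components G S" and v: "v \<in> S"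
  shows "view_edges (induced G S) k v = view_edges G k v"
proof -
  have closed: "\<forall>x y. (x, y) \<in> snd G \<longrightarrow> x \<in> S \<longrightarrow> y \<in> S"
    using S by (simp add: union_of_components_def)
  then have "\<And>j. ball G j v \<subseteq> S" using v by (intro ball_subset_closed) auto
  with closed wf_graph_sym[OF wf] show ?thesis
    unfolding view_edges_def ball_induced[OF S v] by (auto simp: induced_def) blast+
qed

lemma run_local_induced:
  assumes "wf_graph G" and "union_of_components G S"
  shows "run_local A r (induced G S) = run_local A r G \<inter> S"
  using ball_induced[OF assms(2)] view_edges_induced[OF assms] assms(2)
  by (auto simp: run_local_def view_vertices_def induced_def union_of_components_def)

lemma dominating_induced:
  assumes "wf_graph G" and "union_of_components G S" and "dominating G D"
  shows "dominating (induced G S) (D \<inter> S)"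
  using assms wf_graph_sym[OF assms(1)]
  unfolding dominating_def induced_def union_of_components_def by auto blast

lemma dominating_if_locally_dominating:
  assumes "D \<subseteq> fst G"
    and "\<And>w. w \<in> fst G \<Longrightarrow> \<exists>S. w \<in> S \<and> dominating (induced G S) (D \<inter> S)"
  shows "dominating G D"
  using assms unfolding dominating_def induced_def by fastforce

section \<open>Minimum dominating sets\<close>

lemma finite_dominating: "wf_graph G \<Longrightarrow> dominating G D \<Longrightarrow> finite D"
  by (auto simp: dominating_def wf_graph_def intro: finite_subset)

lemma MDS_le: "dominating G D \<Longrightarrow> MDS G \<le> card D"
  unfolding MDS_def by (rule Least_le) blast

lemma MDS_attained: "\<exists>D. dominating G D \<and> card D = MDS G"
proof -
  have "dominating G (fst G)" by (auto simp: dominating_def)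
  then show ?thesis
    unfolding MDS_def using LeastI_ex[of "\<lambda>k. \<exists>D. dominating G D \<and> card D = k"] by blast
qed

lemma MDS_eq_0_iff:
  assumes "wf_graph G"
  shows "MDS G = 0 \<longleftrightarrow> fst G = {}"
proof
  assume "MDS G = 0"
  then obtain D where "dominating G D" "card D = 0" using MDS_attained by metis
  with finite_dominating[OF assms] show "fst G = {}" by (auto simp: dominating_def)
next
  assume "fst G = {}"
  then have "dominating G {}" by (simp add: dominating_def)
  then show "MDS G = 0" using MDS_le by fastforce
qed

definition min_dominating_set :: "graph \<Rightarrow> nat set" where
  "min_dominating_set G = (SOME D. dominating G D \<and> card D = MDS G)"

lemma min_dominating_set:
  "dominating G (min_dominating_set G)" "card (min_dominating_set G) = MDS G"
  using someI_ex[OF MDS_attained[of G]] unfolding min_dominating_set_def by blast+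

lemma sum_MDS_components_le:
  assumes wf: "wf_graph G" and comps: "\<And>K. K \<in> \<K> \<Longrightarrow> union_of_components G K"
    and disj: "pairwise disjnt \<K>" and D: "dominating G D"
  shows "(\<Sum>K\<in>\<K>. MDS (induced G K)) \<le> card (D \<inter> \<Union>\<K>)"
proof -
  have "\<K> \<subseteq> Pow (fst G)" using comps by (auto simp: union_of_components_def)
  then have "finite \<K>" using wf_graph_finite[OF wf] by (simp add: finite_subset)
  have "(\<Sum>K\<in>\<K>. MDS (induced G K)) \<le> (\<Sum>K\<in>\<K>. card (D \<inter> K))"
    by (intro sum_mono MDS_le dominating_induced[OF wf comps D])
  also have "\<dots> = card (\<Union>K\<in>\<K>. D \<inter> K)"
  proof (rule card_UN_disjoint[symmetric])
    show "\<forall>K\<in>\<K>. finite (D \<inter> K)" using finite_dominating[OF wf D] by blast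
    show "\<forall>K\<in>\<K>. \<forall>K'\<in>\<K>. K \<noteq> K' \<longrightarrow> D \<inter> K \<inter> (D \<inter> K') = {}"
      using disj by (auto simp: pairwise_def disjnt_def)
  qed fact
  also have "\<dots> = card (D \<inter> \<Union>\<K>)" by (simp only: Int_Union)
  finally show ?thesis .
qed

section \<open>Solving small components exactly\<close>

definition in_small_component :: "graph \<Rightarrow> nat \<Rightarrow> nat \<Rightarrow> bool" where
  "in_small_component G m v \<longleftrightarrow>
     ball G (Suc (3 * m)) v = ball G (3 * m) v \<and> MDS (induced G (ball G (3 * m) v)) \<le> m"

definition small_vertices :: "graph \<Rightarrow> nat \<Rightarrow> nat set" where
  "small_vertices G m = {v \<in> fst G. in_small_component G m v}"

(* min_dominating_set depends on the component only, so all its vertices select the same set. *)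
definition solve_small_components :: "local_alg \<Rightarrow> nat \<Rightarrow> nat \<Rightarrow> local_alg" where
  "solve_small_components A r m v Vs Es =
     (if in_small_component (Vs, Es) m v
      then v \<in> min_dominating_set (induced (Vs, Es) (ball (Vs, Es) (3 * m) v))
      else A v (ball (Vs, Es) r v) (view_edges (Vs, Es) r v))"

lemma run_solve_small_components:
  assumes wf: "wf_graph G"
  shows "run_local (solve_small_components A r m) (r + 3 * m + 1) G =
    {v \<in> fst G. if in_small_component G m v
       then v \<in> min_dominating_set (induced G (ball G (3 * m) v))
       else v \<in> run_local A r G}"
proof -
  let ?r = "r + 3 * m + 1"
  have "solve_small_components A r m v (ball G ?r v) (view_edges G ?r v) \<longleftrightarrow>
      (if in_small_component G m v
       then v \<in> min_dominating_set (induced G (ball G (3 * m) v))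
       else v \<in> run_local A r G)"
    if v: "v \<in> fst G" for v
  proof -
    have "ball (ball G ?r v, view_edges G ?r v) k v = ball G k v" if "k \<le> ?r" for k
      using ball_of_view[OF wf v that] .
    moreover have "view_edges (ball G ?r v, view_edges G ?r v) r v = view_edges G r v"
      by (rule view_edges_of_view[OF wf v]) simp
    moreover have "induced (ball G ?r v, view_edges G ?r v) (ball G (3 * m) v)
        = induced G (ball G (3 * m) v)"
      by (rule induced_view) simp
    ultimately show ?thesis
      using v by (simp add: solve_small_components_def in_small_component_def
          run_local_def view_vertices_def)
  qed
  then show ?thesis unfolding run_local_def[of _ ?r] view_vertices_def by auto
qed

lemma union_of_components_small_ball:
  "wf_graph G \<Longrightarrow> in_small_component G m v \<Longrightarrow> union_of_components G (ball G (3 * m) v)"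
  by (simp add: in_small_component_def union_of_components_stable_ball wf_graph_edges)

lemma small_component_ball:
  assumes wf: "wf_graph G" and small: "in_small_component G m v" and u: "u \<in> ball G (3 * m) v"
  shows "ball G (3 * m) u = ball G (3 * m) v" and "in_small_component G m u"
proof -
  define K where "K = ball G (3 * m) v"
  define H where "H = induced G K"
  have K: "union_of_components G K"
    unfolding K_def using union_of_components_small_ball[OF wf small] .
  then have wfH: "wf_graph H" unfolding H_def union_of_components_def
    using wf by (blast intro: wf_graph_induced)
  have uK: "u \<in> K" using u by (simp add: K_def)
  \<comment> \<open>A dominating set of \<open>H\<close> with at most \<open>m\<close> vertices leaves no room for a vertex
    at distance \<open>3m + 1\<close> from \<open>u\<close>.\<close>
  have "ball H (Suc (3 * m)) u = ball H (3 * m) u"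
  proof (rule ccontr)
    let ?D = "min_dominating_set H"
    assume grows: "ball H (Suc (3 * m)) u \<noteq> ball H (3 * m) u"
    have "m + 1 \<le> card (?D \<inter> ball H (Suc (3 * m)) u)"
    proof (rule card_dominators_in_growing_ball[OF wfH _ grows])
      show "u \<in> fst H" using uK by (simp add: H_def induced_def)
      show "finite ?D" using finite_dominating[OF wfH min_dominating_set(1)] .
      show "w \<in> ?D \<or> (\<exists>x\<in>?D. (x, w) \<in> snd H)" if "w \<in> ball H (3 * m) u" for w
        using min_dominating_set(1)[of H] that ball_subset[OF wf_graph_edges[OF wfH]]
        unfolding dominating_def by blast
    qed
    also have "\<dots> \<le> card ?D"
      using finite_dominating[OF wfH min_dominating_set(1)] by (intro card_mono) auto
    also have "\<dots> \<le> m"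
      using small by (simp add: min_dominating_set(2) in_small_component_def H_def K_def)
    finally show False by simp
  qed
  then have stable: "ball G (Suc (3 * m)) u = ball G (3 * m) u"
    using ball_induced[OF K uK] by (simp add: H_def)
  have "ball G (3 * m) u \<subseteq> K"
    using K uK by (intro ball_subset_closed) (auto simp: union_of_components_def)
  moreover have "K \<subseteq> ball G (3 * m) u"
    using union_of_components_stable_ball[OF wf_graph_edges[OF wf] stable] ball_sym[OF wf u]
    unfolding K_def by (intro ball_subset_closed) (auto simp: union_of_components_def)
  ultimately show eq: "ball G (3 * m) u = ball G (3 * m) v" by (simp add: K_def)
  show "in_small_component G m u"
    using small stable by (simp add: in_small_component_def eq)
qed

lemma union_of_components_small_vertices:
  assumes wf: "wf_graph G"
  shows "union_of_components G (small_vertices G m)"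
  unfolding union_of_components_def
proof (intro conjI allI impI)
  fix x y assume xy: "(x, y) \<in> snd G" and x: "x \<in> small_vertices G m"
  have "y \<in> ball G (Suc (3 * m)) x"
    using x xy center_in_ball[OF wf_graph_edges[OF wf]]
    by (intro edge_from_ball) (auto simp: small_vertices_def)
  then have "y \<in> ball G (3 * m) x" using x by (simp add: small_vertices_def in_small_component_def)
  then show "y \<in> small_vertices G m"
    using x small_component_ball(2)[OF wf] ball_subset[OF wf_graph_edges[OF wf]]
    by (auto simp: small_vertices_def) blast
qed (auto simp: small_vertices_def)

lemma large_vertex_dominators:
  assumes wf: "wf_graph G" and v: "v \<in> fst G" and large: "\<not> in_small_component G m v"
    and S: "union_of_components G S" "v \<in> S" and D: "dominating G D"
  shows "m + 1 \<le> card (D \<inter> S)"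
proof -
  have E: "snd G \<subseteq> fst G \<times> fst G" using wf by (rule wf_graph_edges)
  have ball_S: "ball G k v \<subseteq> S" for k
    using S by (intro ball_subset_closed) (auto simp: union_of_components_def)
  have fin: "finite D" using finite_dominating[OF wf D] .
  show ?thesis
  proof (cases "ball G (Suc (3 * m)) v = ball G (3 * m) v")
    case False
    have "m + 1 \<le> card (D \<inter> ball G (Suc (3 * m)) v)"
      using D ball_subset[OF E] unfolding dominating_def
      by (intro card_dominators_in_growing_ball[OF wf v False _ fin]) blast
    also have "\<dots> \<le> card (D \<inter> S)" using ball_S fin by (intro card_mono) auto
    finally show ?thesis .
  next
    case True
    then have "m < MDS (induced G (ball G (3 * m) v))"
      using large by (simp add: in_small_component_def)
    also have "\<dots> \<le> card (D \<inter> ball G (3 * m) v)"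
      using union_of_components_stable_ball[OF E True]
      by (intro MDS_le dominating_induced[OF wf _ D])
    also have "\<dots> \<le> card (D \<inter> S)" using ball_S fin by (intro card_mono) auto
    finally show ?thesis by simp
  qed
qed

lemma solve_small_components_on_small:
  assumes wf: "wf_graph G" and small: "in_small_component G m v"
  shows "run_local (solve_small_components A r m) (r + 3 * m + 1) G \<inter> ball G (3 * m) v
    = min_dominating_set (induced G (ball G (3 * m) v))"
proof -
  have "min_dominating_set (induced G (ball G (3 * m) v)) \<subseteq> ball G (3 * m) v"
    using min_dominating_set(1)[of "induced G (ball G (3 * m) v)"]
    unfolding dominating_def induced_def by simp
  moreover have "u \<in> fst G" if "u \<in> ball G (3 * m) v" for u
    using that ball_subset[OF wf_graph_edges[OF wf]] by blast
  ultimately show ?thesis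
    using small_component_ball[OF wf small]
    unfolding run_solve_small_components[OF wf] by auto
qed

lemma solve_small_components_on_large:
  assumes "wf_graph G"
  shows "run_local (solve_small_components A r m) (r + 3 * m + 1) G \<inter> (fst G - small_vertices G m)
    = run_local A r G \<inter> (fst G - small_vertices G m)"
  unfolding run_solve_small_components[OF assms] by (auto simp: small_vertices_def)

lemma dominating_solve_small_components:
  assumes wf: "wf_graph G" and dom: "dominating G (run_local A r G)"
  shows "dominating G (run_local (solve_small_components A r m) (r + 3 * m + 1) G)"
proof (rule dominating_if_locally_dominating)
  let ?Out = "run_local (solve_small_components A r m) (r + 3 * m + 1) G"
  show "?Out \<subseteq> fst G" by (simp add: run_local_def)
  fix w assume w: "w \<in> fst G"
  show "\<exists>S. w \<in> S \<and> dominating (induced G S) (?Out \<inter> S)"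
  proof (cases "in_small_component G m w")
    case True
    show ?thesis
    proof (intro exI conjI)
      show "w \<in> ball G (3 * m) w" using center_in_ball[OF wf_graph_edges[OF wf] w] .
      show "dominating (induced G (ball G (3 * m) w)) (?Out \<inter> ball G (3 * m) w)"
        unfolding solve_small_components_on_small[OF wf True] by (rule min_dominating_set(1))
    qed
  next
    case False
    let ?L = "fst G - small_vertices G m"
    have "union_of_components G ?L"
      using union_of_components_Diff[OF wf union_of_components_small_vertices[OF wf]] .
    then have "dominating (induced G ?L) (?Out \<inter> ?L)"
      unfolding solve_small_components_on_large[OF wf] by (rule dominating_induced[OF wf _ dom])
    moreover have "w \<in> ?L" using w False by (simp add: small_vertices_def)
    ultimately show ?thesis by blast
  qed
qed

lemma card_solve_small_components_on_small:
  assumes wf: "wf_graph G" and D: "dominating G D"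
  shows "card (run_local (solve_small_components A r m) (r + 3 * m + 1) G \<inter> small_vertices G m)
    \<le> card (D \<inter> small_vertices G m)"
proof -
  let ?Out = "run_local (solve_small_components A r m) (r + 3 * m + 1) G"
  let ?S = "small_vertices G m"
  let ?K = "\<lambda>v. ball G (3 * m) v"
  define \<K> where "\<K> = ?K ` ?S"
  have small: "in_small_component G m v" if "v \<in> ?S" for v
    using that by (simp add: small_vertices_def)
  have comps: "union_of_components G K" if "K \<in> \<K>" for K
    using that union_of_components_small_ball[OF wf small] by (auto simp: \<K>_def)
  have "\<K> \<subseteq> Pow (fst G)" using comps by (auto simp: union_of_components_def)
  then have "finite \<K>" using wf_graph_finite[OF wf] by (simp add: finite_subset)
  have "?K v \<subseteq> ?S" if "v \<in> ?S" for v
    using small_component_ball(2)[OF wf small[OF that]] ball_subset[OF wf_graph_edges[OF wf]]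
    by (auto simp: small_vertices_def)
  moreover have "v \<in> ?K v" if "v \<in> ?S" for v
    using that center_in_ball[OF wf_graph_edges[OF wf]] by (simp add: small_vertices_def)
  ultimately have S_eq: "?S = (\<Union>v\<in>?S. ?K v)" by blast
  have "?K v = ?K w" if "v \<in> ?S" "w \<in> ?S" "u \<in> ?K v" "u \<in> ?K w" for u v w
    using small_component_ball(1)[OF wf small] that by metis
  then have "pairwise disjnt \<K>"
    unfolding \<K>_def pairwise_def disjnt_def by blast
  have "?Out \<inter> ?S = (\<Union>v\<in>?S. ?Out \<inter> ?K v)" using S_eq by blast
  also have "\<dots> = (\<Union>v\<in>?S. min_dominating_set (induced G (?K v)))"
    using solve_small_components_on_small[OF wf small] by simp
  also have "\<dots> = (\<Union>K\<in>\<K>. min_dominating_set (induced G K))" by (simp add: \<K>_def image_image)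
  finally have "card (?Out \<inter> ?S) \<le> (\<Sum>K\<in>\<K>. card (min_dominating_set (induced G K)))"
    using card_UN_le[OF \<open>finite \<K>\<close>] by simp
  also have "\<dots> = (\<Sum>K\<in>\<K>. MDS (induced G K))" by (simp add: min_dominating_set(2))
  also have "\<dots> \<le> card (D \<inter> \<Union>\<K>)"
    using sum_MDS_components_le[OF wf comps \<open>pairwise disjnt \<K>\<close> D] .
  also have "\<Union>\<K> = ?S" using S_eq by (simp add: \<K>_def)
  finally show ?thesis .
qed

lemma card_solve_small_components_on_large:
  assumes wf: "wf_graph G" and D: "dominating G D"
    and "0 \<le> \<alpha>" and "0 \<le> \<epsilon>" and "\<beta> \<le> \<epsilon> * real m"
    and A_bound: "real (card (run_local A r (induced G (fst G - small_vertices G m))))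
      \<le> \<alpha> * real (MDS (induced G (fst G - small_vertices G m))) + \<beta>"
  shows "real (card (run_local (solve_small_components A r m) (r + 3 * m + 1) G
      - small_vertices G m)) \<le> (\<alpha> + \<epsilon>) * real (card (D - small_vertices G m))"
proof -
  let ?L = "fst G - small_vertices G m"
  have L: "union_of_components G ?L"
    using union_of_components_Diff[OF wf union_of_components_small_vertices[OF wf]] .
  have "run_local (solve_small_components A r m) (r + 3 * m + 1) G - small_vertices G m
      = run_local A r (induced G ?L)"
    using solve_small_components_on_large[OF wf, of A r m]
    unfolding run_local_induced[OF wf L] by (auto simp: run_local_def)
  moreover have "D - small_vertices G m = D \<inter> ?L"
    using D by (auto simp: dominating_def)
  moreover have
    "real (card (run_local A r (induced G ?L))) \<le> (\<alpha> + \<epsilon>) * real (card (D \<inter> ?L))"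
  proof (cases "?L = {}")
    case True
    then have "run_local A r (induced G ?L) = {}" by (auto simp: run_local_def induced_def)
    then show ?thesis using \<open>0 \<le> \<alpha>\<close> \<open>0 \<le> \<epsilon>\<close> by simp
  next
    case False
    then obtain v where v: "v \<in> ?L" by blast
    then have "m + 1 \<le> card (D \<inter> ?L)"
      using large_vertex_dominators[OF wf _ _ L v D] by (simp add: small_vertices_def)
    then have "\<epsilon> * real m \<le> \<epsilon> * real (card (D \<inter> ?L))"
      using \<open>0 \<le> \<epsilon>\<close> by (intro mult_left_mono) auto
    then have "\<beta> \<le> \<epsilon> * real (card (D \<inter> ?L))" using \<open>\<beta> \<le> \<epsilon> * real m\<close> by linarith
    moreover have "\<alpha> * real (MDS (induced G ?L)) \<le> \<alpha> * real (card (D \<inter> ?L))"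
      using MDS_le[OF dominating_induced[OF wf L D]] \<open>0 \<le> \<alpha>\<close> by (simp add: mult_left_mono)
    ultimately show ?thesis using A_bound by (simp add: distrib_right)
  qed
  ultimately show ?thesis by simp
qed

lemma solve_small_components_approx:
  assumes closed: "closed_under_components \<C>"
    and A_correct: "\<forall>G\<in>\<C>. wf_graph G \<longrightarrow> dominating G (run_local A r G) \<and>
      real (card (run_local A r G)) \<le> \<alpha> * real (MDS G) + \<beta>"
    and "1 \<le> \<alpha>" and "0 < \<epsilon>" and "\<beta> \<le> \<epsilon> * real m"
    and G: "G \<in> \<C>" and wf: "wf_graph G"
  shows "dominating G (run_local (solve_small_components A r m) (r + 3 * m + 1) G) \<and>
    real (card (run_local (solve_small_components A r m) (r + 3 * m + 1) G))
      \<le> (\<alpha> + \<epsilon>) * real (MDS G)"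
proof
  let ?Out = "run_local (solve_small_components A r m) (r + 3 * m + 1) G"
  let ?S = "small_vertices G m" and ?D = "min_dominating_set G"
  let ?L = "fst G - ?S"
  show "dominating G ?Out"
    using A_correct G wf by (intro dominating_solve_small_components) auto
  have "union_of_components G ?L"
    using union_of_components_Diff[OF wf union_of_components_small_vertices[OF wf]] .
  then have "induced G ?L \<in> \<C>" using closed G wf unfolding closed_under_components_def by blast
  moreover have "wf_graph (induced G ?L)" using wf_graph_induced[OF wf] by blast
  ultimately have large: "real (card (?Out - ?S)) \<le> (\<alpha> + \<epsilon>) * real (card (?D - ?S))"
    using A_correct \<open>1 \<le> \<alpha>\<close> \<open>0 < \<epsilon>\<close> \<open>\<beta> \<le> \<epsilon> * real m\<close>
    by (intro card_solve_small_components_on_large[OF wf min_dominating_set(1)]) auto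
  have "real (card (?Out \<inter> ?S)) \<le> real (card (?D \<inter> ?S))"
    using card_solve_small_components_on_small[OF wf min_dominating_set(1)] by simp
  also have "\<dots> \<le> (\<alpha> + \<epsilon>) * real (card (?D \<inter> ?S))"
    using mult_right_mono[of 1 "\<alpha> + \<epsilon>" "real (card (?D \<inter> ?S))"] \<open>1 \<le> \<alpha>\<close> \<open>0 < \<epsilon>\<close> by simp
  finally have small: "real (card (?Out \<inter> ?S)) \<le> (\<alpha> + \<epsilon>) * real (card (?D \<inter> ?S))" .
  have "finite ?Out" using wf_graph_finite[OF wf] by (simp add: run_local_def)
  then have "card ?Out = card (?Out \<inter> ?S) + card (?Out - ?S)" by (rule card_Int_Diff)
  then have "real (card ?Out) = real (card (?Out \<inter> ?S)) + real (card (?Out - ?S))"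
    by (simp only: of_nat_add)
  also have "\<dots> \<le> (\<alpha> + \<epsilon>) * (real (card (?D \<inter> ?S)) + real (card (?D - ?S)))"
    using small large by (simp add: distrib_left)
  also have "\<dots> = (\<alpha> + \<epsilon>) * real (MDS G)"
  proof -
    have "card ?D = card (?D \<inter> ?S) + card (?D - ?S)"
      using finite_dominating[OF wf min_dominating_set(1)] by (rule card_Int_Diff)
    then show ?thesis by (simp add: min_dominating_set(2))
  qed
  finally show "real (card ?Out) \<le> (\<alpha> + \<epsilon>) * real (MDS G)" .
qed

lemma additive_error_absorbed:
  assumes "wf_graph G" and "X \<subseteq> fst G" and "real (card X) \<le> \<alpha> * real (MDS G) + \<beta>"
    and "\<beta> \<le> \<epsilon>" and "0 \<le> \<epsilon>"
  shows "real (card X) \<le> (\<alpha> + \<epsilon>) * real (MDS G)"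
proof (cases "MDS G = 0")
  case True
  with assms(1,2) have "X = {}" by (simp add: MDS_eq_0_iff)
  with True show ?thesis by simp
next
  case False
  then have "\<epsilon> \<le> \<epsilon> * real (MDS G)" using \<open>0 \<le> \<epsilon>\<close> by (simp add: mult_le_cancel_left1)
  with assms(3,4) show ?thesis by (simp add: distrib_right)
qed

theorem mainTheorem15:
  "\<exists>c::real. c > 0 \<and>
    (\<forall>(\<alpha>::real) (\<beta>::real) (\<epsilon>::real) (\<C>::graph set) (A::local_alg) (r::nat).
      \<alpha> \<ge> 1 \<longrightarrow> \<beta> \<ge> 0 \<longrightarrow> \<epsilon> > 0 \<longrightarrow> closed_under_components \<C> \<longrightarrow>
      (\<forall>G\<in>\<C>. wf_graph G \<longrightarrow> dominating G (run_local A r G) \<and>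
          real (card (run_local A r G)) \<le> \<alpha> * real (MDS G) + \<beta>) \<longrightarrow>
      (\<exists>(A'::local_alg) (r'::nat). real r' \<le> real r + c * \<beta> / \<epsilon> \<and>
         (\<forall>G\<in>\<C>. wf_graph G \<longrightarrow> dominating G (run_local A' r' G) \<and>
            real (card (run_local A' r' G)) \<le> (\<alpha> + \<epsilon>) * real (MDS G))))"
proof (rule exI[of _ 7], intro conjI allI impI)
  fix \<alpha> \<beta> \<epsilon> :: real and \<C> :: "graph set" and A :: local_alg and r :: nat
  assume "1 \<le> \<alpha>" "0 \<le> \<beta>" "0 < \<epsilon>" "closed_under_components \<C>"
    and A_correct: "\<forall>G\<in>\<C>. wf_graph G \<longrightarrow> dominating G (run_local A r G) \<and>
      real (card (run_local A r G)) \<le> \<alpha> * real (MDS G) + \<beta>"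
  show "\<exists>A' r'. real r' \<le> real r + 7 * \<beta> / \<epsilon> \<and>
    (\<forall>G\<in>\<C>. wf_graph G \<longrightarrow> dominating G (run_local A' r' G) \<and>
      real (card (run_local A' r' G)) \<le> (\<alpha> + \<epsilon>) * real (MDS G))"
  proof (cases "\<beta> \<le> \<epsilon>")
    case True
    then show ?thesis
      using A_correct additive_error_absorbed[of _ "run_local A r _" \<alpha> \<beta> \<epsilon>] \<open>0 \<le> \<beta>\<close> \<open>0 < \<epsilon>\<close>
      by (intro exI[of _ A] exI[of _ r]) (auto simp: run_local_def)
  next
    case False
    define m where "m = nat \<lceil>\<beta> / \<epsilon>\<rceil>"
    have "\<beta> / \<epsilon> \<le> real m" "real m \<le> \<beta> / \<epsilon> + 1"
      using \<open>0 \<le> \<beta>\<close> \<open>0 < \<epsilon>\<close> by (simp_all add: m_def)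
    then have "\<beta> \<le> \<epsilon> * real m" "real (r + 3 * m + 1) \<le> real r + 7 * \<beta> / \<epsilon>"
      using False \<open>0 < \<epsilon>\<close> by (simp_all add: field_simps)
    then show ?thesis
      using solve_small_components_approx[OF \<open>closed_under_components \<C>\<close> A_correct \<open>1 \<le> \<alpha>\<close> \<open>0 < \<epsilon>\<close>]
      by blast
  qed
qed simp

end
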